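(* Let $\mathbb{S}^2_\infty$ be the Euclidean unit sphere centered at the origin in $\mathbb{R}^3$, equipped with the $\ell^\infty$-metric, and $\mathbb{D}^3_\infty$ the Euclidean closed unit ball with the $\ell^\infty$-metric. Then: (1) $\mathcal{F}(\mathbb{S}^2_\infty)=\mathcal{E}(\mathbb{S}^2_\infty)$, and this set is isometric to the tight span $\mathbf{E}(\mathbb{S}^2_\infty)$; (2) $\mathcal{F}(\mathbb{D}^3_\infty)=\mathcal{E}(\mathbb{D}^3_\infty)=\mathcal{F}(\mathbb{S}^2_\infty)$, and this set is isometric to the tight span $\mathbf{E}(\mathbb{D}^3_\infty)$. In addition, $\mathbf{E}(\mathbb{D}^3_\infty)$ is isometric to $\mathbf{E}(\mathbb{S}^2_\infty)$.
   Context: $\mathbb{R}^3_\infty$ is $\mathbb{R}^3$ with the $\ell^\infty$-metric $d_\infty$. For $1\le i\le 3$, $\Lambda_i=\{x:x_i=\|x\|_\infty\}$ and $p+\xi\Lambda_i=\{p+\xi z:z\in\Lambda_i\}$ for $\xi\in\{\pm1\}$. For compact $X\subseteq\mathbb{R}^3_\infty$: $\mathcal{F}(X)$ is the set of points $p$ with $(p+\xi\Lambda_i)\cap X\ne\emptyset$ for all $i$ and $\xi$ ($X$-surrounding points); $\mathcal{E}(X)$ is the set of points $z\in\mathbb{R}^3$ such that for every $x\in X$ there is $y\in X$ with $d_\infty(x,z)+d_\infty(z,y)=d_\infty(x,y)$ ($X$-minimal points); both carry the metric $d_\infty$. For a metric space $X$, $\Delta(X)=\{f:X\to\mathbb{R}\text{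 bounded}:f(x)+f(x')\ge d_X(x,x')\}$ and the tight span $\mathbf{E}(X)$ is the set of pointwise-minimal elements of $\Delta(X)$ with the sup-norm metric. *)

theory Defs
  imports "HOL-Analysis.Analysis"
begin

definition linf_norm :: "real^3 \<Rightarrow> real" where
  "linf_norm x = Max (range (\<lambda>i. \<bar>x $ i\<bar>))"

definition d_inf :: "real^3 \<Rightarrow> real^3 \<Rightarrow> real" where
  "d_inf x y = linf_norm (x - y)"

definition Lambda :: "3 \<Rightarrow> (real^3) set" where
  "Lambda i = {x. x $ i = linf_norm x}"

definition cone_at :: "real^3 \<Rightarrow> real \<Rightarrow> 3 \<Rightarrow> (real^3) set" where
  "cone_at p \<xi> i = {p + \<xi> *\<^sub>R z | z. z \<in> Lambda i}"

definition surrounding :: "(real^3) set \<Rightarrow> (real^3) set" where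
  "surrounding X = {p. \<forall>i. \<forall>\<xi>\<in>{1, -1}. cone_at p \<xi> i \<inter> X \<noteq> {}}"

definition minimal_pts :: "(real^3) set \<Rightarrow> (real^3) set" where
  "minimal_pts X = {z. \<forall>x\<in>X. \<exists>y\<in>X. d_inf x z + d_inf z y = d_inf x y}"

definition Delta :: "'a set \<Rightarrow> ('a \<Rightarrow> 'a \<Rightarrow> real) \<Rightarrow> ('a \<Rightarrow> real) set" where
  "Delta X d = {f. (\<forall>x. x \<notin> X \<longrightarrow> f x = 0) \<and> (\<exists>B. \<forall>x\<in>X. \<bar>f x\<bar> \<le> B)
                 \<and> (\<forall>x\<in>X. \<forall>x'\<in>X. f x + f x' \<ge> d x x')}"

definition tight_span :: "'a set \<Rightarrow> ('a \<Rightarrow> 'a \<Rightarrow> real) \<Rightarrow> ('a \<Rightarrow> real) set" where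
  "tight_span X d = {f \<in> Delta X d. \<forall>g\<in>Delta X d. (\<forall>x\<in>X. g x \<le> f x) \<longrightarrow> (\<forall>x\<in>X. g x = f x)}"

definition sup_dist :: "'a set \<Rightarrow> ('a \<Rightarrow> real) \<Rightarrow> ('a \<Rightarrow> real) \<Rightarrow> real" where
  "sup_dist X f g = (SUP x\<in>X. \<bar>f x - g x\<bar>)"

definition isometric :: "'a set \<Rightarrow> ('a \<Rightarrow> 'a \<Rightarrow> real) \<Rightarrow> 'b set \<Rightarrow> ('b \<Rightarrow> 'b \<Rightarrow> real) \<Rightarrow> bool" where
  "isometric A dA B dB \<longleftrightarrow> (\<exists>h. bij_betw h A B \<and> (\<forall>x\<in>A. \<forall>y\<in>A. dB (h x) (h y) = dA x y))"

end

theory Submission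
  imports Defs
begin

text \<open>
  The l-infinity distance is realised by a single coordinate.  If z is X-surrounding and x is any
  point, choose a coordinate k realising d(x,z) and a point y of X in the cone at z that opens
  along k away from x; then d(x,y) = d(x,z) + d(z,y).  Hence surrounding points are minimal, and
  z \<mapsto> d(\<cdot>,z) is distance-preserving from F(X) into the functions on X.  Conversely, if X lies in
  the cube [-1,1]^3 and contains the six points \<plusminus>e_i, a minimal point z outside X lies in the
  open cube, and a geodesic from the axis point opposite to z must leave z along that axis; so it
  meets both cones at z in that direction and z is surrounding.  A point of the ball found in a
  cone can be pushed outward along the cone's axis until it hits the sphere, so the ball and the
  sphere have the same surrounding points.  Finally, every tight function f is of the form
  d(\<cdot>,z), and for compact X the characterisation f(x) = sup_y (d(x,y) - f(y)) of tight functions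
  has its supremum attained, which makes z minimal.
\<close>

lemma linf_norm_eq_infnorm: "linf_norm x = infnorm x"
  unfolding linf_norm_def infnorm_cart by (simp add: cSup_eq_Max full_SetCompr_eq)

lemma d_inf_eq_infnorm: "d_inf x y = infnorm (x - y)"
  by (simp add: d_inf_def linf_norm_eq_infnorm)

lemma d_inf_sym: "d_inf x y = d_inf y x"
  unfolding d_inf_eq_infnorm by (rule infnorm_sub)

lemma d_inf_triangle: "d_inf x z \<le> d_inf x y + d_inf y z"
  unfolding d_inf_eq_infnorm using infnorm_triangle[of "x - y" "y - z"] by simp

lemma d_inf_nonneg: "0 \<le> d_inf x y"
  unfolding d_inf_eq_infnorm by (rule infnorm_pos_le)

lemma d_inf_eq_0_iff [simp]: "d_inf x y = 0 \<longleftrightarrow> x = y"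
  unfolding d_inf_eq_infnorm by (simp add: infnorm_eq_0)

lemma d_inf_le_dist: "d_inf x y \<le> dist x y"
  unfolding d_inf_eq_infnorm dist_norm by (rule infnorm_le_norm)

lemma component_le_d_inf: "\<bar>x$i - y$i\<bar> \<le> d_inf x y"
  unfolding d_inf_eq_infnorm using component_le_infnorm_cart[of "x - y" i] by simp

lemma d_inf_attained: "\<exists>i. d_inf x y = \<bar>x$i - y$i\<bar>"
proof -
  have "linf_norm (x - y) \<in> range (\<lambda>i. \<bar>(x - y)$i\<bar>)"
    unfolding linf_norm_def by (rule Max_in) auto
  then show ?thesis by (auto simp: d_inf_def)
qed

lemma d_inf_le: "(\<And>i. \<bar>x$i - y$i\<bar> \<le> c) \<Longrightarrow> d_inf x y \<le> c"
  using d_inf_attained[of x y] by metis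

lemma continuous_on_d_inf [continuous_intros]:
  "continuous_on S f \<Longrightarrow> continuous_on S g \<Longrightarrow> continuous_on S (\<lambda>x. d_inf (f x) (g x))"
  unfolding d_inf_eq_infnorm by (intro continuous_intros)

lemma d_inf_geodesic_coordinate:
  assumes "d_inf x z + d_inf z y = d_inf x y"
  obtains k where "\<bar>x$k - z$k\<bar> = d_inf x z" "\<bar>z$k - y$k\<bar> = d_inf z y"
    "0 \<le> (x$k - z$k) * (z$k - y$k)"
proof -
  obtain k where k: "d_inf x y = \<bar>x$k - y$k\<bar>" using d_inf_attained by blast
  have "\<bar>x$k - z$k\<bar> \<le> d_inf x z" "\<bar>z$k - y$k\<bar> \<le> d_inf z y"
    by (rule component_le_d_inf)+
  moreover have "\<bar>x$k - y$k\<bar> \<le> \<bar>x$k - z$k\<bar> + \<bar>z$k - y$k\<bar>" by simp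
  ultimately have eq: "\<bar>x$k - z$k\<bar> = d_inf x z" "\<bar>z$k - y$k\<bar> = d_inf z y"
    using k assms by linarith+
  then have "\<bar>(x$k - z$k) + (z$k - y$k)\<bar> = \<bar>x$k - z$k\<bar> + \<bar>z$k - y$k\<bar>"
    using k assms by simp
  then have "0 \<le> (x$k - z$k) * (z$k - y$k)"
    by (cases "0 \<le> x$k - z$k"; cases "0 \<le> z$k - y$k") (auto simp: zero_le_mult_iff)
  with eq show thesis by (rule that)
qed

lemma mem_cone_at_iff:
  assumes "\<xi> \<in> {1, -1}"
  shows "q \<in> cone_at p \<xi> i \<longleftrightarrow> \<xi> * (q$i - p$i) = d_inf q p"
proof -
  have \<xi>: "\<xi> * \<xi> = 1" "\<bar>\<xi>\<bar> = 1" using assms by auto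
  have "q \<in> cone_at p \<xi> i \<longleftrightarrow> \<xi> *\<^sub>R (q - p) \<in> Lambda i"
  proof
    assume "q \<in> cone_at p \<xi> i"
    then obtain z where "z \<in> Lambda i" "q = p + \<xi> *\<^sub>R z" unfolding cone_at_def by auto
    then show "\<xi> *\<^sub>R (q - p) \<in> Lambda i" using \<xi> by simp
  next
    assume "\<xi> *\<^sub>R (q - p) \<in> Lambda i"
    moreover have "q = p + \<xi> *\<^sub>R (\<xi> *\<^sub>R (q - p))" using \<xi> by simp
    ultimately show "q \<in> cone_at p \<xi> i" unfolding cone_at_def by blast
  qed
  moreover have "linf_norm (\<xi> *\<^sub>R (q - p)) = d_inf q p"
    using \<xi> by (simp add: linf_norm_eq_infnorm d_inf_eq_infnorm infnorm_mul)
  ultimately show ?thesis unfolding Lambda_def by simp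
qed

lemma subset_surrounding: "X \<subseteq> surrounding X"
proof
  fix x assume "x \<in> X"
  moreover have "x \<in> cone_at x \<xi> i" if "\<xi> \<in> {1, -1}" for \<xi> i
    using mem_cone_at_iff[OF that] by simp
  ultimately show "x \<in> surrounding X" unfolding surrounding_def by blast
qed

lemma surrounding_mono: "X \<subseteq> Y \<Longrightarrow> surrounding X \<subseteq> surrounding Y"
  unfolding surrounding_def by blast

lemma d_inf_through_cone_apex:
  assumes "\<xi> \<in> {1, -1}" "y \<in> cone_at z \<xi> k" "\<xi> * (z$k - x$k) = d_inf x z"
  shows "d_inf x z + d_inf z y = d_inf x y"
proof (rule antisym)
  have "\<xi> * (y$k - z$k) = d_inf z y"
    using assms(1,2) mem_cone_at_iff[of \<xi> y z k] d_inf_sym[of y z] by simp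
  then have "d_inf x z + d_inf z y = \<xi> * (y$k - x$k)"
    using assms(3) by (simp add: algebra_simps)
  also have "\<dots> \<le> \<bar>y$k - x$k\<bar>" using assms(1) by auto
  also have "\<dots> \<le> d_inf x y" using component_le_d_inf[of y k x] d_inf_sym[of y x] by simp
  finally show "d_inf x z + d_inf z y \<le> d_inf x y" .
qed (rule d_inf_triangle)

lemma surrounding_extends_geodesic:
  assumes "z \<in> surrounding X"
  obtains y where "y \<in> X" "d_inf x z + d_inf z y = d_inf x y"
proof -
  obtain k where k: "d_inf x z = \<bar>x$k - z$k\<bar>" using d_inf_attained by blast
  define \<xi> :: real where "\<xi> = (if x$k \<le> z$k then 1 else -1)"
  have \<xi>: "\<xi> \<in> {1, -1}" "\<xi> * (z$k - x$k) = d_inf x z" using k by (auto simp: \<xi>_def)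
  then obtain y where "y \<in> X" "y \<in> cone_at z \<xi> k"
    using assms unfolding surrounding_def by blast
  with \<xi> show thesis using d_inf_through_cone_apex that by blast
qed

lemma surrounding_subset_minimal_pts: "surrounding X \<subseteq> minimal_pts X"
  unfolding minimal_pts_def using surrounding_extends_geodesic by blast

lemma geodesic_meets_both_cones:
  assumes geo: "d_inf x z + d_inf z y = d_inf x y"
    and dominant: "\<And>k. k \<noteq> j \<Longrightarrow> \<bar>x$k - z$k\<bar> < \<bar>x$j - z$j\<bar>"
    and \<xi>: "\<xi> \<in> {1, -1}"
  shows "x \<in> cone_at z \<xi> j \<or> y \<in> cone_at z \<xi> j"
proof -
  obtain k where k: "\<bar>x$k - z$k\<bar> = d_inf x z" "\<bar>z$k - y$k\<bar> = d_inf z y"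
    "0 \<le> (x$k - z$k) * (z$k - y$k)"
    using geo by (rule d_inf_geodesic_coordinate)
  have "k = j"
  proof (rule ccontr)
    assume "k \<noteq> j"
    then show False
      using dominant[of k] k(1) component_le_d_inf[of x j z] by linarith
  qed
  show ?thesis
  proof (cases "0 \<le> \<xi> * (x$j - z$j)")
    case True
    then have "\<xi> * (x$j - z$j) = d_inf x z"
      using \<xi> k(1) \<open>k = j\<close> by auto
    then show ?thesis using \<xi> mem_cone_at_iff by blast
  next
    case False
    then have "0 \<le> \<xi> * (y$j - z$j)"
      using \<xi> k(3) \<open>k = j\<close> by (auto simp: zero_le_mult_iff)
    then have "\<xi> * (y$j - z$j) = d_inf y z"
      using \<xi> k(2) \<open>k = j\<close> d_inf_sym[of y z] by auto
    then show ?thesis using \<xi> mem_cone_at_iff by blast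
  qed
qed

lemma opposite_axis_point:
  obtains u :: "real^'n" where "u \<in> {axis k 1, - axis k 1}" "\<bar>u$k - z$k\<bar> = 1 + \<bar>z$k\<bar>"
    "\<And>i. i \<noteq> k \<Longrightarrow> u$i = 0"
proof (cases "0 \<le> z$k")
  case True
  then show thesis by (intro that[of "- axis k 1"]) (auto simp: axis_def)
next
  case False
  then show thesis by (intro that[of "axis k 1"]) (auto simp: axis_def)
qed

lemma d_inf_le_2_in_cube:
  assumes "x \<in> cbox (- 1) 1" "y \<in> cbox (- 1) 1"
  shows "d_inf x y \<le> 2"
proof (rule d_inf_le)
  fix i
  have "\<bar>x$i\<bar> \<le> 1" "\<bar>y$i\<bar> \<le> 1" using assms by (auto simp: mem_box_cart abs_le_iff)
  then show "\<bar>x$i - y$i\<bar> \<le> 2" by linarith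
qed

lemma minimal_pt_in_open_cube:
  assumes cube: "X \<subseteq> cbox (- 1) 1" and axis: "\<And>i. axis i 1 \<in> X" "\<And>i. - axis i 1 \<in> X"
    and z: "z \<in> minimal_pts X" "z \<notin> X"
  shows "\<bar>z$k\<bar> < 1"
proof (rule ccontr)
  assume far: "\<not> \<bar>z$k\<bar> < 1"
  obtain u :: "real^3" where u: "u \<in> {axis k 1, - axis k 1}" "\<bar>u$k - z$k\<bar> = 1 + \<bar>z$k\<bar>"
    using opposite_axis_point[of k z] by blast
  have "u \<in> X" using u(1) axis by auto
  then obtain y where y: "y \<in> X" "d_inf u z + d_inf z y = d_inf u y"
    using z(1) unfolding minimal_pts_def by blast
  have "2 \<le> d_inf u z" using component_le_d_inf[of u k z] u(2) far by linarith
  moreover have "d_inf u y \<le> 2" using \<open>u \<in> X\<close> y(1) cube by (intro d_inf_le_2_in_cube) auto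
  ultimately have "d_inf z y \<le> 0" using y(2) by linarith
  then have "z = y" using d_inf_nonneg[of z y] by simp
  with y(1) z(2) show False by simp
qed

lemma minimal_pts_subset_surrounding:
  assumes cube: "X \<subseteq> cbox (- 1) 1" and axis: "\<And>i. axis i 1 \<in> X" "\<And>i. - axis i 1 \<in> X"
  shows "minimal_pts X \<subseteq> surrounding X"
proof
  fix z assume z: "z \<in> minimal_pts X"
  show "z \<in> surrounding X"
  proof (cases "z \<in> X")
    case True
    then show ?thesis using subset_surrounding by blast
  next
    case False
    show ?thesis unfolding surrounding_def
    proof (intro CollectI allI ballI)
      fix j and \<xi> :: real assume \<xi>: "\<xi> \<in> {1, -1}"
      obtain u :: "real^3" where u: "u \<in> {axis j 1, - axis j 1}" "\<bar>u$j - z$j\<bar> = 1 + \<bar>z$j\<bar>"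
        "\<And>k. k \<noteq> j \<Longrightarrow> u$k = 0"
        using opposite_axis_point[of j z] by blast
      have "u \<in> X" using u(1) axis by auto
      then obtain y where y: "y \<in> X" "d_inf u z + d_inf z y = d_inf u y"
        using z unfolding minimal_pts_def by blast
      have "\<bar>u$k - z$k\<bar> < \<bar>u$j - z$j\<bar>" if "k \<noteq> j" for k
        using u(2,3) that minimal_pt_in_open_cube[OF cube axis z False, of k] by simp
      then have "u \<in> cone_at z \<xi> j \<or> y \<in> cone_at z \<xi> j"
        by (rule geodesic_meets_both_cones[OF y(2) _ \<xi>])
      then show "cone_at z \<xi> j \<inter> X \<noteq> {}" using \<open>u \<in> X\<close> y(1) by blast
    qed
  qed
qed

lemma surrounding_eq_minimal_pts:
  assumes "X \<subseteq> cbox (- 1) 1" "\<And>i. axis i 1 \<in> X" "\<And>i. - axis i 1 \<in> X"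
  shows "surrounding X = minimal_pts X"
  using minimal_pts_subset_surrounding[OF assms] surrounding_subset_minimal_pts by blast

lemma cone_at_shift_outward:
  assumes \<xi>: "\<xi> \<in> {1, -1}" and q: "q \<in> cone_at p \<xi> i" and "0 \<le> t"
  shows "q + (t * \<xi>) *\<^sub>R axis i 1 \<in> cone_at p \<xi> i"
proof -
  define q' where "q' = q + (t * \<xi>) *\<^sub>R axis i 1"
  have \<xi>1: "\<xi> * \<xi> = 1" "\<bar>\<xi>\<bar> = 1" using \<xi> by auto
  have "\<xi> * (q$i - p$i) = d_inf q p" using q \<xi> mem_cone_at_iff by blast
  then have shift: "\<xi> * (q'$i - p$i) = d_inf q p + t" using \<xi>1 by (simp add: q'_def algebra_simps)
  have "d_inf q' p \<le> d_inf q p + t"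
  proof (rule d_inf_le)
    fix k show "\<bar>q'$k - p$k\<bar> \<le> d_inf q p + t"
    proof (cases "k = i")
      case True
      then have "\<bar>q'$k - p$k\<bar> = \<bar>\<xi> * (q'$i - p$i)\<bar>" using \<xi>1 by (simp add: abs_mult)
      then show ?thesis using shift \<open>0 \<le> t\<close> d_inf_nonneg[of q p] by simp
    next
      case False
      then show ?thesis using component_le_d_inf[of q k p] \<open>0 \<le> t\<close> by (simp add: q'_def axis_def)
    qed
  qed
  moreover have "\<bar>\<xi> * (q'$i - p$i)\<bar> \<le> d_inf q' p"
    using component_le_d_inf[of q' i p] \<xi>1 by (simp add: abs_mult)
  ultimately have "\<xi> * (q'$i - p$i) = d_inf q' p"
    using shift abs_ge_self[of "\<xi> * (q'$i - p$i)"] by linarith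
  then show ?thesis using \<xi> mem_cone_at_iff unfolding q'_def by blast
qed

lemma shift_onto_sphere:
  fixes a q :: "real^'n"
  assumes q: "q \<in> cball a r" and \<xi>: "\<xi> \<in> {1, -1}"
  obtains t where "0 \<le> t" "q + (t * \<xi>) *\<^sub>R axis i 1 \<in> sphere a r"
proof -
  define f where "f t = dist a (q + (t * \<xi>) *\<^sub>R axis i 1)" for t
  have qa: "\<bar>(a - q)$i\<bar> \<le> r"
    using q component_le_norm_cart[of "a - q" i] by (simp add: dist_norm)
  have "f 0 \<le> r" using q by (simp add: f_def)
  moreover have "r \<le> f (2 * r)"
  proof -
    have "r \<le> \<bar>(a - q)$i - 2 * r * \<xi>\<bar>" using qa \<xi> by auto
    also have "\<dots> \<le> f (2 * r)"
      using component_le_norm_cart[of "a - (q + (2 * r * \<xi>) *\<^sub>R axis i 1)" i]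
      by (simp add: f_def dist_norm)
    finally show ?thesis .
  qed
  moreover have "0 \<le> 2 * r" using qa by linarith
  moreover have "continuous_on {0..2 * r} f" unfolding f_def by (intro continuous_intros)
  ultimately obtain t where "0 \<le> t" "f t = r" using IVT'[of f 0 r "2 * r"] by auto
  then show thesis using that by (simp add: f_def)
qed

lemma surrounding_cball_eq_sphere: "surrounding (cball a r) = surrounding (sphere a r)"
proof
  show "surrounding (sphere a r) \<subseteq> surrounding (cball a r)"
    by (rule surrounding_mono) (rule sphere_cball)
  show "surrounding (cball a r) \<subseteq> surrounding (sphere a r)"
  proof
    fix p assume p: "p \<in> surrounding (cball a r)"
    have "cone_at p \<xi> i \<inter> sphere a r \<noteq> {}" if \<xi>: "\<xi> \<in> {1, -1}" for \<xi> i
    proof -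
      obtain q where "q \<in> cone_at p \<xi> i" "q \<in> cball a r"
        using p \<xi> unfolding surrounding_def by blast
      moreover obtain t where "0 \<le> t" "q + (t * \<xi>) *\<^sub>R axis i 1 \<in> sphere a r"
        using shift_onto_sphere[OF \<open>q \<in> cball a r\<close> \<xi>] .
      ultimately show ?thesis using cone_at_shift_outward[OF \<xi>] by blast
    qed
    then show "p \<in> surrounding (sphere a r)" unfolding surrounding_def by blast
  qed
qed

definition dist_fun :: "(real^3) set \<Rightarrow> real^3 \<Rightarrow> real^3 \<Rightarrow> real" where
  "dist_fun X z x = (if x \<in> X then d_inf x z else 0)"

lemma dist_fun_in_Delta:
  assumes "bounded X"
  shows "dist_fun X z \<in> Delta X d_inf"
proof -
  obtain B where B: "\<And>x. x \<in> X \<Longrightarrow> norm x \<le> B" using assms bounded_iff by metis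
  have "\<bar>dist_fun X z x\<bar> \<le> B + norm z" if "x \<in> X" for x
  proof -
    have "\<bar>dist_fun X z x\<bar> = d_inf x z" using that d_inf_nonneg by (simp add: dist_fun_def)
    also have "\<dots> \<le> dist x z" by (rule d_inf_le_dist)
    also have "\<dots> \<le> norm x + norm z" by (simp add: dist_norm norm_triangle_ineq4)
    finally show ?thesis using B[OF that] by linarith
  qed
  moreover have "d_inf x x' \<le> dist_fun X z x + dist_fun X z x'" if "x \<in> X" "x' \<in> X" for x x'
    using that d_inf_triangle[of x x' z] d_inf_sym[of z x'] by (simp add: dist_fun_def)
  ultimately show ?thesis unfolding Delta_def by (auto simp: dist_fun_def)
qed

lemma dist_fun_in_tight_span:
  assumes "bounded X" "z \<in> minimal_pts X"
  shows "dist_fun X z \<in> tight_span X d_inf"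
  unfolding tight_span_def
proof (intro CollectI conjI ballI impI dist_fun_in_Delta[OF assms(1)])
  fix g x assume g: "g \<in> Delta X d_inf" and le: "\<forall>x\<in>X. g x \<le> dist_fun X z x" and x: "x \<in> X"
  obtain y where y: "y \<in> X" "d_inf x z + d_inf z y = d_inf x y"
    using assms(2) x unfolding minimal_pts_def by blast
  have "d_inf x y \<le> g x + g y" using g x y(1) unfolding Delta_def by blast
  moreover have "g y \<le> d_inf y z" "g x \<le> d_inf x z" using le x y(1) by (auto simp: dist_fun_def)
  ultimately show "g x = dist_fun X z x" using y(2) d_inf_sym[of z y] x by (simp add: dist_fun_def)
qed

lemma sup_dist_dist_fun:
  assumes "X \<noteq> {}" "z' \<in> surrounding X"
  shows "sup_dist X (dist_fun X z) (dist_fun X z') = d_inf z z'"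
  unfolding sup_dist_def
proof (rule cSup_eq_maximum)
  obtain y where y: "y \<in> X" "d_inf z z' + d_inf z' y = d_inf z y"
    using assms(2) by (rule surrounding_extends_geodesic)
  then have "\<bar>dist_fun X z y - dist_fun X z' y\<bar> = d_inf z z'"
    using d_inf_sym[of z y] d_inf_sym[of z' y] d_inf_nonneg[of z z'] by (simp add: dist_fun_def)
  with y(1) show "d_inf z z' \<in> (\<lambda>x. \<bar>dist_fun X z x - dist_fun X z' x\<bar>) ` X" by force
next
  fix r assume "r \<in> (\<lambda>x. \<bar>dist_fun X z x - dist_fun X z' x\<bar>) ` X"
  then obtain y where "y \<in> X" "r = \<bar>d_inf y z - d_inf y z'\<bar>" by (auto simp: dist_fun_def)
  then show "r \<le> d_inf z z'"
    using d_inf_triangle[of y z z'] d_inf_triangle[of y z' z] d_inf_sym[of z z'] by (simp add: abs_le_iff)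
qed

lemma Delta_fun_upd:
  assumes f: "f \<in> Delta X d" and x: "x \<in> X" and diag: "d x x \<le> c + c"
    and above: "\<And>y. y \<in> X \<Longrightarrow> d x y \<le> c + f y"
    and sym: "\<And>y. y \<in> X \<Longrightarrow> d y x = d x y"
  shows "f(x := c) \<in> Delta X d"
proof -
  obtain B where B: "\<forall>y\<in>X. \<bar>f y\<bar> \<le> B"
    and outside: "\<forall>y. y \<notin> X \<longrightarrow> f y = 0"
    and pair: "\<forall>y\<in>X. \<forall>y'\<in>X. d y y' \<le> f y + f y'"
    using f unfolding Delta_def by blast
  have "d y y' \<le> (f(x := c)) y + (f(x := c)) y'" if "y \<in> X" "y' \<in> X" for y y'
  proof (cases "y = x"; cases "y' = x")
    assume "y \<noteq> x" "y' \<noteq> x"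
    then show ?thesis using pair that by simp
  next
    assume "y \<noteq> x" "y' = x"
    then show ?thesis using above[of y] sym[of y] that by (simp add: add.commute)
  next
    assume "y = x" "y' \<noteq> x"
    then show ?thesis using above[of y'] that by simp
  next
    assume "y = x" "y' = x"
    then show ?thesis using diag by simp
  qed
  moreover have "\<bar>(f(x := c)) y\<bar> \<le> max B \<bar>c\<bar>" if "y \<in> X" for y
    using B that by auto
  moreover have "(f(x := c)) y = 0" if "y \<notin> X" for y
    using outside x that by auto
  ultimately show ?thesis unfolding Delta_def by blast
qed

lemma tight_span_eq_SUP:
  assumes f: "f \<in> tight_span X d" and x: "x \<in> X" and "d x x = 0"
    and sym: "\<And>y. y \<in> X \<Longrightarrow> d y x = d x y"
  shows "f x = (SUP y\<in>X. d x y - f y)"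
proof -
  have fD: "f \<in> Delta X d"
    and fmin: "\<And>g. g \<in> Delta X d \<Longrightarrow> \<forall>y\<in>X. g y \<le> f y \<Longrightarrow> g x = f x"
    using f x unfolding tight_span_def by blast+
  have lower: "d x y - f y \<le> f x" if "y \<in> X" for y
    using fD x that unfolding Delta_def by force
  define s where "s = (SUP y\<in>X. d x y - f y)"
  have "s \<le> f x" unfolding s_def using x lower by (intro cSUP_least) auto
  have upper: "d x y - f y \<le> s" if "y \<in> X" for y
    unfolding s_def using that lower by (intro cSUP_upper bdd_aboveI2)
  have "f x \<le> max s 0"
  proof (rule ccontr)
    assume lt: "\<not> f x \<le> max s 0"
    have "f(x := max s 0) \<in> Delta X d"
    proof (rule Delta_fun_upd[OF fD x _ _ sym])
      show "d x x \<le> max s 0 + max s 0" using \<open>d x x = 0\<close> by simp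
      fix y assume "y \<in> X"
      then show "d x y \<le> max s 0 + f y" using upper[of y] by simp
    qed
    moreover have "\<forall>y\<in>X. (f(x := max s 0)) y \<le> f y" using lt by (auto simp: not_le)
    ultimately have "max s 0 = f x" using fmin[of "f(x := max s 0)"] by simp
    with lt show False by simp
  qed
  moreover have "- f x \<le> s" using upper[OF x] \<open>d x x = 0\<close> by simp
  ultimately show ?thesis using \<open>s \<le> f x\<close> unfolding s_def by linarith
qed

lemma Delta_dominates_dist_fun:
  assumes f: "f \<in> Delta X d_inf" and "X \<noteq> {}"
  obtains z where "\<And>x. x \<in> X \<Longrightarrow> d_inf x z \<le> f x"
proof
  define z :: "real^3" where "z = (\<chi> k. SUP x\<in>X. x$k - f x)"
  fix x assume x: "x \<in> X"
  have coord: "x$k - f x \<le> z$k \<and> z$k \<le> x$k + f x" for k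
  proof -
    have bound: "x'$k - f x' \<le> x$k + f x" if "x' \<in> X" for x'
    proof -
      have "d_inf x' x \<le> f x' + f x" using f x that unfolding Delta_def by blast
      then show ?thesis using component_le_d_inf[of x' k x] by (simp add: abs_le_iff)
    qed
    have "x$k - f x \<le> (SUP x'\<in>X. x'$k - f x')"
      using x bound by (intro cSUP_upper bdd_aboveI2)
    moreover have "(SUP x'\<in>X. x'$k - f x') \<le> x$k + f x"
      using \<open>X \<noteq> {}\<close> bound by (intro cSUP_least)
    ultimately show ?thesis by (simp add: z_def)
  qed
  show "d_inf x z \<le> f x"
  proof (rule d_inf_le)
    fix k show "\<bar>x$k - z$k\<bar> \<le> f x" unfolding abs_le_iff using coord[of k] by linarith
  qed
qed

lemma tight_span_eq_dist_fun:
  assumes f: "f \<in> tight_span X d_inf" and "bounded X" "X \<noteq> {}"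
  obtains z where "f = dist_fun X z"
proof -
  have fD: "f \<in> Delta X d_inf"
    and fmin: "\<And>g. g \<in> Delta X d_inf \<Longrightarrow> \<forall>x\<in>X. g x \<le> f x \<Longrightarrow> \<forall>x\<in>X. g x = f x"
    using f unfolding tight_span_def by blast+
  obtain z where z: "\<And>x. x \<in> X \<Longrightarrow> d_inf x z \<le> f x"
    using Delta_dominates_dist_fun[OF fD \<open>X \<noteq> {}\<close>] by blast
  have "\<forall>x\<in>X. dist_fun X z x = f x"
    using fmin[OF dist_fun_in_Delta[OF \<open>bounded X\<close>]] z by (simp add: dist_fun_def)
  moreover have "f x = 0" if "x \<notin> X" for x using fD that unfolding Delta_def by blast
  ultimately have "f = dist_fun X z" by (auto simp: dist_fun_def)
  then show thesis by (rule that)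
qed

lemma minimal_pts_if_dist_fun_in_tight_span:
  assumes "compact X" "dist_fun X z \<in> tight_span X d_inf"
  shows "z \<in> minimal_pts X"
  unfolding minimal_pts_def
proof (intro CollectI ballI)
  fix x assume x: "x \<in> X"
  have "d_inf x z = (SUP y\<in>X. d_inf x y - dist_fun X z y)"
    using tight_span_eq_SUP[OF assms(2) x _ d_inf_sym] x by (simp add: dist_fun_def)
  also have "\<dots> = (SUP y\<in>X. d_inf x y - d_inf y z)"
    by (rule SUP_cong) (simp_all add: dist_fun_def)
  finally have sup: "d_inf x z = (SUP y\<in>X. d_inf x y - d_inf y z)" .
  have "continuous_on X (\<lambda>y. d_inf x y - d_inf y z)" by (intro continuous_intros)
  then obtain y where y: "y \<in> X"
    "\<And>y'. y' \<in> X \<Longrightarrow> d_inf x y' - d_inf y' z \<le> d_inf x y - d_inf y z"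
    using continuous_attains_sup[OF assms(1)] x by blast
  have "(SUP y\<in>X. d_inf x y - d_inf y z) = d_inf x y - d_inf y z"
    using y by (intro cSup_eq_maximum) auto
  then have "d_inf x z + d_inf z y = d_inf x y" using sup d_inf_sym[of z y] by simp
  with y(1) show "\<exists>y\<in>X. d_inf x z + d_inf z y = d_inf x y" by blast
qed

lemma isometric_surrounding_tight_span:
  assumes "compact X" "X \<noteq> {}" and FE: "surrounding X = minimal_pts X"
  shows "isometric (surrounding X) d_inf (tight_span X d_inf) (sup_dist X)"
  unfolding isometric_def
proof (intro exI[of _ "dist_fun X"] conjI ballI)
  have "bounded X" using \<open>compact X\<close> by (rule compact_imp_bounded)
  have dist: "sup_dist X (dist_fun X z) (dist_fun X z') = d_inf z z'" if "z' \<in> surrounding X" for z z'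
    using \<open>X \<noteq> {}\<close> that by (rule sup_dist_dist_fun)
  then show "sup_dist X (dist_fun X z) (dist_fun X z') = d_inf z z'" if "z' \<in> surrounding X" for z z'
    using that .
  have "inj_on (dist_fun X) (surrounding X)"
  proof (rule inj_onI)
    fix z z' assume "z' \<in> surrounding X" "dist_fun X z = dist_fun X z'"
    then have "d_inf z z' = sup_dist X (dist_fun X z') (dist_fun X z')" using dist by metis
    also have "\<dots> = 0" using \<open>X \<noteq> {}\<close> by (simp add: sup_dist_def)
    finally show "z = z'" by simp
  qed
  moreover have "tight_span X d_inf \<subseteq> dist_fun X ` surrounding X"
  proof
    fix f assume f: "f \<in> tight_span X d_inf"
    then obtain z where z: "f = dist_fun X z"
      using \<open>bounded X\<close> \<open>X \<noteq> {}\<close> by (rule tight_span_eq_dist_fun)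
    then have "z \<in> minimal_pts X"
      using f \<open>compact X\<close> minimal_pts_if_dist_fun_in_tight_span by blast
    with z FE show "f \<in> dist_fun X ` surrounding X" by blast
  qed
  moreover have "dist_fun X ` surrounding X \<subseteq> tight_span X d_inf"
    using dist_fun_in_tight_span[OF \<open>bounded X\<close>] FE by auto
  ultimately show "bij_betw (dist_fun X) (surrounding X) (tight_span X d_inf)"
    unfolding bij_betw_def by blast
qed

lemma isometric_sym: "isometric A dA B dB \<Longrightarrow> isometric B dB A dA"
  unfolding isometric_def
proof (elim exE conjE, intro exI[of _ "inv_into A _"] conjI ballI)
  fix h assume h: "bij_betw h A B" "\<forall>x\<in>A. \<forall>y\<in>A. dB (h x) (h y) = dA x y"
  show "bij_betw (inv_into A h) B A" using h(1) by (rule bij_betw_inv_into)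
  fix x y assume "x \<in> B" "y \<in> B"
  then show "dA (inv_into A h x) (inv_into A h y) = dB x y"
    using h by (metis bij_betw_imp_surj_on bij_betw_inv_into bij_betw_apply f_inv_into_f)
qed

lemma isometric_trans: "isometric A dA B dB \<Longrightarrow> isometric B dB C dC \<Longrightarrow> isometric A dA C dC"
  unfolding isometric_def
proof (elim exE conjE, intro exI[of _ "_ \<circ> _"] conjI ballI)
  fix h g assume h: "bij_betw h A B" "\<forall>x\<in>A. \<forall>y\<in>A. dB (h x) (h y) = dA x y"
    and g: "bij_betw g B C" "\<forall>x\<in>B. \<forall>y\<in>B. dC (g x) (g y) = dB x y"
  show "bij_betw (g \<circ> h) A C" using h(1) g(1) by (rule bij_betw_trans)
  fix x y assume "x \<in> A" "y \<in> A"
  then show "dC ((g \<circ> h) x) ((g \<circ> h) y) = dA x y" using h g by (simp add: bij_betw_apply)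
qed

theorem theorem5p17:
  defines "S \<equiv> sphere (0::real^3) 1" and "D \<equiv> cball (0::real^3) 1"
  shows "surrounding S = minimal_pts S
      \<and> isometric (surrounding S) d_inf (tight_span S d_inf) (sup_dist S)
      \<and> surrounding D = minimal_pts D
      \<and> minimal_pts D = surrounding S
      \<and> isometric (surrounding D) d_inf (tight_span D d_inf) (sup_dist D)
      \<and> isometric (tight_span D d_inf) (sup_dist D) (tight_span S d_inf) (sup_dist S)"
proof -
  have "\<bar>x$i\<bar> \<le> 1" if "x \<in> cball (0::real^3) 1" for x i
    using that component_le_norm_cart[of x i] by simp
  then have cube: "S \<subseteq> cbox (- 1) 1" "D \<subseteq> cbox (- 1) 1"
    by (auto simp: S_def D_def mem_box_cart abs_le_iff)
  have axis: "axis i 1 \<in> S" "- axis i 1 \<in> S" "axis i 1 \<in> D" "- axis i 1 \<in> D" for i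
    by (simp_all add: S_def D_def)
  have FS: "surrounding S = minimal_pts S" by (rule surrounding_eq_minimal_pts[OF cube(1) axis(1,2)])
  have FD: "surrounding D = minimal_pts D" by (rule surrounding_eq_minimal_pts[OF cube(2) axis(3,4)])
  have DS: "surrounding D = surrounding S"
    unfolding S_def D_def by (rule surrounding_cball_eq_sphere)
  have isoS: "isometric (surrounding S) d_inf (tight_span S d_inf) (sup_dist S)"
    using axis by (intro isometric_surrounding_tight_span FS) (auto simp: S_def)
  have isoD: "isometric (surrounding D) d_inf (tight_span D d_inf) (sup_dist D)"
    using axis by (intro isometric_surrounding_tight_span FD) (auto simp: D_def)
  have "isometric (tight_span D d_inf) (sup_dist D) (tight_span S d_inf) (sup_dist S)"
    using isometric_trans[OF isometric_sym[OF isoD] isoS[folded DS]] .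
  with FS FD DS isoS isoD show ?thesis by simp
qed

end
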